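(* Let $n\ge 1$ and $N>n$ be integers, let $\lambda>0$, $\beta\in(0,1)$, and let $\tilde b_0\neq 0$ be a real number. Let $\hat\Sigma\in\mathbb{R}^{(n+1)\times(n+1)}$ be a symmetric positive definite Toeplitz matrix, $[\hat\Sigma]_{ts}=\hat r_{|t-s|}$ for $t,s=1,\dots,n+1$. Let $K_{TC}\in\mathbb{R}^{(n+1)\times(n+1)}$ be the matrix with entries $[K_{TC}]_{ts}=\beta^{\max(t,s)}-\beta^{n+2}$ for $t,s=1,\dots,n+1$, let $v=[1,0,\dots,0]^T\in\mathbb{R}^{n+1}$, and define $$\hat{\mathbf b}_{ML}=[\hat b_0,\hat b_1,\dots,\hat b_n]^T=\tilde b_0^{-1}\left(\hat\Sigma+((N-n)\lambda K_{TC})^{-1}\right)^{-1}v .$$ If the polynomial $\hat b_{ML}(z)=\sum_{k=0}^n \hat b_k z^{-k}$ is not identically zero, then all its zeros lie strictly inside the unit circle, i.e. every (complex) root $\breve z$ of $\hat b_0 z^n+\hat b_1 z^{n-1}+\dots+\hat b_n$ satisfies $|\breve z|<1$.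
   Context: This is the regularized (kernel-based) maximum entropy estimate of the coefficients of a high-order AR model $b(z)y_t=e_t$ with a Gaussian prior $\mathbf b\sim\mathcal N(0,\lambda K_{TC})$ ("tuned-correlated kernel"). In the paper, $\hat r_k=\frac1N\sum_{t=1}^{N-k}y_ty_{t+k}$ are sample covariance lags of data $y_1,\dots,y_N$ and $\tilde b_0$ is a preliminary estimate of $b_0$; for the claim only the stated properties of $\hat\Sigma$ and $\tilde b_0$ are needed. *)

theory Defs
  imports Complex_Main "Jordan_Normal_Form.Gauss_Jordan_Elimination"
    "HOL-Computational_Algebra.Polynomial"
begin

definition sym_pos_def_mat :: "nat \<Rightarrow> real mat \<Rightarrow> bool" where
  "sym_pos_def_mat m A \<longleftrightarrow> A \<in> carrier_mat m m \<and> transpose_mat A = A \<and>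
     (\<forall>x \<in> carrier_vec m. x \<noteq> 0\<^sub>v m \<longrightarrow> x \<bullet> (A *\<^sub>v x) > 0)"

definition toeplitz_mat :: "nat \<Rightarrow> real mat \<Rightarrow> bool" where
  "toeplitz_mat m A \<longleftrightarrow> A \<in> carrier_mat m m \<and>
     (\<exists>r :: nat \<Rightarrow> real. \<forall>i<m. \<forall>j<m. A $$ (i,j) = r (nat \<bar>int i - int j\<bar>))"

(* TC kernel, indices shifted to 0-based: entry (i,j) corresponds to t=i+1, s=j+1 *)
definition K_TC :: "nat \<Rightarrow> real \<Rightarrow> real mat" where
  "K_TC n \<beta> = mat (n+1) (n+1) (\<lambda>(i,j). \<beta> ^ (max (i+1) (j+1)) - \<beta> ^ (n+2))"

definition minv :: "real mat \<Rightarrow> real mat" where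
  "minv A = the (mat_inverse A)"

definition b_ML :: "nat \<Rightarrow> nat \<Rightarrow> real \<Rightarrow> real \<Rightarrow> real \<Rightarrow> real mat \<Rightarrow> real vec" where
  "b_ML n N lam \<beta> b0t Sig =
     (1 / b0t) \<cdot>\<^sub>v (minv (Sig + minv ((real (N - n) * lam) \<cdot>\<^sub>m K_TC n \<beta>))
        *\<^sub>v unit_vec (n+1) 0)"

definition bpoly :: "nat \<Rightarrow> real vec \<Rightarrow> real poly" where
  "bpoly n b = (\<Sum>k\<le>n. monom (b $ k) (n - k))"

end

theory Submission
  imports Defs "Jordan_Normal_Form.Determinant"
begin

text \<open>
  The inverse of the scaled TC kernel is \<open>D\<^sup>T W D\<close>, with \<open>D\<close> the forward difference
  and \<open>W\<close> diagonal with nondecreasing positive weights, so \<open>A = \<Sigma> + D\<^sup>T W D\<close> is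
  positive definite and \<open>A b = e\<^sub>0 / b\<^sub>0\<close> for the estimate \<open>b\<close>. If \<open>z\<close> is a root,
  dividing out \<open>X - z\<close> writes the coefficient vector as \<open>b = h - z s\<close>, where \<open>s\<close> is \<open>h\<close> shifted down by one place.
  Since \<open>s\<^sub>0 = 0\<close>, \<open>s\<^sup>* A b = 0\<close>, whence \<open>b\<^sup>* A b = h\<^sup>* A h - |z|\<^sup>2 s\<^sup>* A s\<close>.
  The shift leaves the Toeplitz part unchanged and can only increase the difference part,
  so \<open>h\<^sup>* A h \<le> s\<^sup>* A s\<close>, and positivity of \<open>b\<^sup>* A b\<close> gives \<open>|z| < 1\<close>.
\<close>

lemma minv_eq_right_inverse:
  fixes A B :: "'a :: field mat"
  assumes A: "A \<in> carrier_mat m m" and B: "B \<in> carrier_mat m m" and AB: "A * B = 1\<^sub>m m"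
  shows "the (mat_inverse A) = B"
proof -
  have "det A * det B = 1" using arg_cong[OF AB, of det] det_mult[OF A B] det_one by simp
  hence "det A \<noteq> 0" by auto
  hence "A \<in> Units (ring_mat TYPE('a) m m)" by (rule det_non_zero_imp_unit[OF A])
  then obtain C where C: "mat_inverse A = Some C"
    using mat_inverse(1)[OF A, of m] by (cases "mat_inverse A") auto
  from mat_inverse(2)[OF A C] have CA: "C * A = 1\<^sub>m m" and Cc: "C \<in> carrier_mat m m" by auto
  have "C = C * (A * B)" using AB Cc by simp
  also have "\<dots> = (C * A) * B" using A B Cc by (simp add: assoc_mult_mat)
  also have "\<dots> = B" using CA B by simp
  finally show ?thesis unfolding C by simp
qed

lemma mult_mat_inverse:
  fixes A :: "'a :: field mat"
  assumes A: "A \<in> carrier_mat m m" and "det A \<noteq> 0"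
  shows "A * the (mat_inverse A) = 1\<^sub>m m" "the (mat_inverse A) \<in> carrier_mat m m"
proof -
  have "A \<in> Units (ring_mat TYPE('a) m m)" by (rule det_non_zero_imp_unit[OF A assms(2)])
  then obtain B where B: "mat_inverse A = Some B"
    using mat_inverse(1)[OF A, of m] by (cases "mat_inverse A") auto
  with mat_inverse(2)[OF A B]
  show "A * the (mat_inverse A) = 1\<^sub>m m" "the (mat_inverse A) \<in> carrier_mat m m" by auto
qed

definition sesq_form :: "real mat \<Rightarrow> (nat \<Rightarrow> complex) \<Rightarrow> (nat \<Rightarrow> complex) \<Rightarrow> complex" where
  "sesq_form A x y = (\<Sum>i<dim_row A. \<Sum>j<dim_col A. cnj (x i) * of_real (A $$ (i,j)) * y j)"

lemma sesq_form_cong: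
  assumes "\<And>i. i < dim_row A \<Longrightarrow> x i = x' i" "\<And>j. j < dim_col A \<Longrightarrow> y j = y' j"
  shows "sesq_form A x y = sesq_form A x' y'"
  unfolding sesq_form_def using assms by (intro sum.cong refl) auto

lemma sesq_form_diff_right: "sesq_form A x (\<lambda>j. y j - c * z j) = sesq_form A x y - c * sesq_form A x z"
  unfolding sesq_form_def by (simp add: algebra_simps sum_subtractf sum_distrib_left)

lemma sesq_form_diff_left: "sesq_form A (\<lambda>i. y i - c * z i) x = sesq_form A y x - cnj c * sesq_form A z x"
  unfolding sesq_form_def by (simp add: algebra_simps sum_subtractf sum_distrib_left)

lemma sesq_form_add_mat:
  assumes "A \<in> carrier_mat m m" "B \<in> carrier_mat m m"
  shows "sesq_form (A + B) x y = sesq_form A x y + sesq_form B x y"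
  unfolding sesq_form_def using assms by (simp add: sum.distrib[symmetric] algebra_simps)

lemma sesq_form_cnj_swap:
  assumes "A \<in> carrier_mat m m" "transpose_mat A = A"
  shows "sesq_form A x y = cnj (sesq_form A y x)"
proof -
  have sym: "A $$ (i,j) = A $$ (j,i)" if "i < m" "j < m" for i j
    using assms that by (metis index_transpose_mat(1) carrier_matD)
  have "(\<Sum>i<m. \<Sum>j<m. cnj (x i) * of_real (A $$ (i,j)) * y j)
      = (\<Sum>j<m. \<Sum>i<m. cnj (x i) * of_real (A $$ (i,j)) * y j)"
    by (rule sum.swap)
  then show ?thesis
    unfolding sesq_form_def using assms(1)
    by (simp add: sum_distrib_left sym mult_ac)
qed

lemma sesq_form_mult_vec:
  assumes A: "A \<in> carrier_mat m m" and v: "v \<in> carrier_vec m"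
  shows "sesq_form A x (\<lambda>j. of_real (v $ j)) = (\<Sum>i<m. cnj (x i) * of_real ((A *\<^sub>v v) $ i))"
proof -
  have "(A *\<^sub>v v) $ i = (\<Sum>j<m. A $$ (i,j) * v $ j)" if "i < m" for i
    using A v that by (simp add: scalar_prod_def row_def atLeast0LessThan)
  then show ?thesis
    unfolding sesq_form_def using A by (simp add: sum_distrib_left mult.assoc)
qed

lemma Re_sesq_form_self:
  assumes "A \<in> carrier_mat m m"
  shows "Re (sesq_form A x x) = vec m (\<lambda>i. Re (x i)) \<bullet> (A *\<^sub>v vec m (\<lambda>i. Re (x i)))
    + vec m (\<lambda>i. Im (x i)) \<bullet> (A *\<^sub>v vec m (\<lambda>i. Im (x i)))"
  using assms unfolding sesq_form_def
  by (simp add: scalar_prod_def row_def atLeast0LessThan sum_distrib_left sum.distrib[symmetric] algebra_simps)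

lemma Re_sesq_form_pos_if_sym_pos_def:
  assumes "sym_pos_def_mat m A" "\<exists>k<m. x k \<noteq> 0"
  shows "Re (sesq_form A x x) > 0"
proof -
  have A: "A \<in> carrier_mat m m"
    and pd: "\<And>v. v \<in> carrier_vec m \<Longrightarrow> v \<noteq> 0\<^sub>v m \<Longrightarrow> v \<bullet> (A *\<^sub>v v) > 0"
    using assms(1) unfolding sym_pos_def_mat_def by auto
  have nonneg: "vec m f \<bullet> (A *\<^sub>v vec m f) \<ge> 0" for f
    using pd[of "vec m f"] A by (cases "vec m f = 0\<^sub>v m") auto
  have pos: "vec m f \<bullet> (A *\<^sub>v vec m f) > 0" if "k < m" "f k \<noteq> 0" for f k
    using pd[of "vec m f"] that by (metis index_vec index_zero_vec(1) vec_carrier)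
  obtain k where "k < m" "x k \<noteq> 0" using assms(2) by auto
  then have "Re (x k) \<noteq> 0 \<or> Im (x k) \<noteq> 0" using complex_eqI by force
  then show ?thesis
    unfolding Re_sesq_form_self[OF A] using nonneg pos \<open>k < m\<close>
    by (meson add_nonneg_pos add_pos_nonneg)
qed

lemma det_nonzero_if_Re_sesq_form_pos:
  assumes A: "A \<in> carrier_mat m m"
    and pos: "\<And>x. \<exists>k<m. x k \<noteq> 0 \<Longrightarrow> Re (sesq_form A x x) > 0"
  shows "det A \<noteq> 0"
proof
  assume "det A = 0"
  then obtain v where v: "v \<in> carrier_vec m" "v \<noteq> 0\<^sub>v m" "A *\<^sub>v v = 0\<^sub>v m"
    using det_0_iff_vec_prod_zero[OF A] by auto
  then have "\<exists>k<m. complex_of_real (v $ k) \<noteq> 0"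
    by (metis eq_vecI index_zero_vec carrier_vecD of_real_eq_0_iff)
  then have "Re (sesq_form A (\<lambda>j. of_real (v $ j)) (\<lambda>j. of_real (v $ j))) > 0"
    by (rule pos)
  moreover have "sesq_form A (\<lambda>j. of_real (v $ j)) (\<lambda>j. of_real (v $ j)) = 0"
    unfolding sesq_form_mult_vec[OF A v(1)] using v(3) by simp
  ultimately show False by simp
qed

lemma cmod_lt_1_if_shift_dominates:
  fixes A :: "real mat"
  assumes A: "A \<in> carrier_mat m m" "transpose_mat A = A"
    and pos: "\<And>x. \<exists>k<m. x k \<noteq> 0 \<Longrightarrow> Re (sesq_form A x x) > 0"
    and b: "\<And>k. k < m \<Longrightarrow> b k = h k - z * s k"
    and b_nonzero: "\<exists>k<m. b k \<noteq> 0" and s_nonzero: "\<exists>k<m. s k \<noteq> 0"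
    and orth: "sesq_form A s b = 0"
    and dominates: "Re (sesq_form A h h) \<le> Re (sesq_form A s s)"
  shows "cmod z < 1"
proof -
  have b_eq: "sesq_form A x b = sesq_form A x (\<lambda>j. h j - z * s j)"
    and eq_b: "sesq_form A b x = sesq_form A (\<lambda>j. h j - z * s j) x" for x
    using A(1) b by (auto intro: sesq_form_cong)
  have sh: "sesq_form A s h = z * sesq_form A s s"
    using orth unfolding b_eq sesq_form_diff_right by simp
  have hs: "sesq_form A h s = cnj z * cnj (sesq_form A s s)"
    using sesq_form_cnj_swap[OF A, of h s] sh by simp
  have "sesq_form A b b = sesq_form A h h - z * sesq_form A h s - cnj z * (sesq_form A s h - z * sesq_form A s s)"
    unfolding b_eq eq_b sesq_form_diff_left sesq_form_diff_right by (simp add: algebra_simps)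
  also have "\<dots> = sesq_form A h h - z * cnj z * cnj (sesq_form A s s)"
    using sh hs by simp
  finally have "Re (sesq_form A b b) = Re (sesq_form A h h) - (cmod z)\<^sup>2 * Re (sesq_form A s s)"
    by (simp add: complex_norm_square[symmetric])
  moreover have "Re (sesq_form A b b) > 0" "Re (sesq_form A s s) > 0"
    using pos b_nonzero s_nonzero by auto
  ultimately have "(cmod z)\<^sup>2 * Re (sesq_form A s s) < 1 * Re (sesq_form A s s)"
    using dominates by linarith
  then have "(cmod z)\<^sup>2 < 1"
    using \<open>Re (sesq_form A s s) > 0\<close> by (metis mult_less_cancel_right_pos)
  then show ?thesis by (simp add: power_less_one_iff abs_square_less_1)
qed

section \<open>Kernels depending on the larger index\<close>

definition diff_coeff :: "nat \<Rightarrow> nat \<Rightarrow> real" where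
  "diff_coeff k i = of_bool (i = k) - of_bool (i = Suc k)"

definition max_kernel :: "nat \<Rightarrow> (nat \<Rightarrow> real) \<Rightarrow> real mat" where
  "max_kernel m g = mat m m (\<lambda>(i,j). g (max i j))"

text \<open>The product \<open>D\<^sup>T W D\<close> of the forward difference \<open>D\<close> and \<open>W = diag (1 / (g k - g (k+1)))\<close>.\<close>

definition max_kernel_inv :: "nat \<Rightarrow> (nat \<Rightarrow> real) \<Rightarrow> real mat" where
  "max_kernel_inv m g =
     mat m m (\<lambda>(i,j). \<Sum>k<m. diff_coeff k i * diff_coeff k j / (g k - g (Suc k)))"

lemma sum_diff_coeff:
  fixes f :: "nat \<Rightarrow> 'a :: real_algebra_1"
  assumes "k < m"
  shows "(\<Sum>l<m. of_real (diff_coeff k l) * f l) = f k - (if Suc k < m then f (Suc k) else 0)"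
proof -
  have "(\<Sum>l<m. of_real (diff_coeff k l) * f l) =
      (\<Sum>l<m. (if k = l then f k else 0) - (if Suc k = l then f (Suc k) else 0))"
    unfolding diff_coeff_def by (intro sum.cong refl) (auto simp: algebra_simps)
  then show ?thesis using assms by (simp add: sum_subtractf sum.delta)
qed

lemma sum_diff_coeff_indicator_le:
  assumes "i < m" "j < m"
  shows "(\<Sum>k<m. diff_coeff k j * of_bool (i \<le> k)) = of_bool (i = j)"
proof -
  have "(\<Sum>k<m. diff_coeff k j * of_bool (i \<le> k))
      = (\<Sum>k<m. of_bool (k = j \<and> i \<le> j)) - (\<Sum>k<m. of_bool (k = j - 1 \<and> 0 < j \<and> i \<le> j - 1))"
    unfolding diff_coeff_def sum_subtractf[symmetric] by (intro sum.cong refl) auto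
  also have "\<dots> = of_bool (i \<le> j) - of_bool (0 < j \<and> i \<le> j - 1)"
    using assms by (simp add: sum.delta' of_bool_def)
  also have "\<dots> = of_bool (i = j)" by auto
  finally show ?thesis .
qed

lemma max_kernel_mult_inv:
  assumes gm: "g m = 0" and g_step: "\<And>k. k < m \<Longrightarrow> g k \<noteq> g (Suc k)"
  shows "max_kernel m g * max_kernel_inv m g = 1\<^sub>m m"
proof (rule eq_matI)
  fix i j assume "i < dim_row (1\<^sub>m m)" "j < dim_col (1\<^sub>m m)"
  then have i: "i < m" and j: "j < m" by auto
  \<comment> \<open>\<open>g m = 0\<close> lets the truncated difference at the last index be a true difference.\<close>
  have row_diff: "(\<Sum>l<m. g (max i l) * diff_coeff k l) = (g k - g (Suc k)) * of_bool (i \<le> k)"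
    if k: "k < m" for k
  proof -
    have "(\<Sum>l<m. g (max i l) * diff_coeff k l) = g (max i k) - g (max i (Suc k))"
    proof -
      have "\<not> Suc k < m \<Longrightarrow> g (max i (Suc k)) = 0"
        using i k gm by (metis Suc_lessI max.absorb2 less_imp_le_nat)
      then show ?thesis
        using sum_diff_coeff[OF k, of "\<lambda>l. g (max i l)"] by (auto simp: mult.commute)
    qed
    then show ?thesis by (auto simp: max_def le_Suc_eq)
  qed
  have "(max_kernel m g * max_kernel_inv m g) $$ (i,j)
      = (\<Sum>l<m. g (max i l) * (\<Sum>k<m. diff_coeff k l * diff_coeff k j / (g k - g (Suc k))))"
    using i j unfolding max_kernel_def max_kernel_inv_def
    by (simp add: scalar_prod_def row_def col_def atLeast0LessThan)
  also have "\<dots> = (\<Sum>k<m. diff_coeff k j / (g k - g (Suc k)) * (\<Sum>l<m. g (max i l) * diff_coeff k l))"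
    unfolding sum_distrib_left by (subst sum.swap) (intro sum.cong refl, simp add: mult_ac)
  also have "\<dots> = (\<Sum>k<m. diff_coeff k j * of_bool (i \<le> k))"
    using g_step by (intro sum.cong refl) (simp add: row_diff)
  also have "\<dots> = 1\<^sub>m m $$ (i,j)"
    using sum_diff_coeff_indicator_le[OF i j] i j by simp
  finally show "(max_kernel m g * max_kernel_inv m g) $$ (i,j) = 1\<^sub>m m $$ (i,j)" .
qed (auto simp: max_kernel_def max_kernel_inv_def)

lemma sesq_form_max_kernel_inv:
  "sesq_form (max_kernel_inv m g) x x =
     of_real (\<Sum>k<m. (cmod (x k - (if Suc k < m then x (Suc k) else 0)))\<^sup>2 / (g k - g (Suc k)))"
proof -
  define w where "w k = complex_of_real (1 / (g k - g (Suc k)))" for k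
  define d where "d k i = complex_of_real (diff_coeff k i)" for k i
  have "sesq_form (max_kernel_inv m g) x x
      = (\<Sum>i<m. \<Sum>j<m. \<Sum>k<m. w k * (d k i * cnj (x i)) * (d k j * x j))"
    unfolding sesq_form_def max_kernel_inv_def w_def d_def
    by (simp add: sum_distrib_left sum_distrib_right mult_ac)
  also have "\<dots> = (\<Sum>k<m. \<Sum>i<m. \<Sum>j<m. w k * (d k i * cnj (x i)) * (d k j * x j))"
    by (rule trans[OF sum.cong[OF refl sum.swap] sum.swap])
  also have "\<dots> = (\<Sum>k<m. w k * cnj (\<Sum>i<m. d k i * x i) * (\<Sum>j<m. d k j * x j))"
    by (simp add: d_def sum_distrib_left sum_distrib_right mult_ac)
  also have "\<dots> = (\<Sum>k<m. w k * of_real ((cmod (x k - (if Suc k < m then x (Suc k) else 0)))\<^sup>2))"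
  proof (intro sum.cong refl)
    fix k assume "k \<in> {..<m}"
    then have k: "k < m" by simp
    have cnj_mult_self: "cnj y * y = complex_of_real ((cmod y)\<^sup>2)" for y
      using complex_norm_square[of y] by (simp add: mult.commute)
    show "w k * cnj (\<Sum>i<m. d k i * x i) * (\<Sum>j<m. d k j * x j) =
        w k * of_real ((cmod (x k - (if Suc k < m then x (Suc k) else 0)))\<^sup>2)"
      by (simp only: d_def sum_diff_coeff[OF k] mult.assoc cnj_mult_self)
  qed
  finally show ?thesis by (simp add: w_def)
qed

lemma Re_sesq_form_max_kernel_inv_nonneg:
  assumes "\<And>k. k < m \<Longrightarrow> g (Suc k) < g k"
  shows "Re (sesq_form (max_kernel_inv m g) x x) \<ge> 0"
  unfolding sesq_form_max_kernel_inv using assms by (auto intro!: sum_nonneg divide_nonneg_pos)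

section \<open>Shifting and roots of the reversed polynomial\<close>

definition shift_right :: "(nat \<Rightarrow> 'a::zero) \<Rightarrow> nat \<Rightarrow> 'a" where
  "shift_right h k = (case k of 0 \<Rightarrow> 0 | Suc j \<Rightarrow> h j)"

lemma shift_right_simps [simp]:
  "shift_right h 0 = 0" "shift_right h (Suc k) = h k"
  by (simp_all add: shift_right_def)

lemma sesq_form_toeplitz_shift_right:
  assumes "toeplitz_mat (Suc n) T" and hn: "h n = 0"
  shows "sesq_form T (shift_right h) (shift_right h) = sesq_form T h h"
proof -
  obtain r where T: "T \<in> carrier_mat (Suc n) (Suc n)"
    and r: "\<And>i j. i < Suc n \<Longrightarrow> j < Suc n \<Longrightarrow> T $$ (i,j) = r (nat \<bar>int i - int j\<bar>)"
    using assms(1) unfolding toeplitz_mat_def by auto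
  have "sesq_form T (shift_right h) (shift_right h)
      = (\<Sum>i<n. \<Sum>j<n. cnj (h i) * of_real (T $$ (Suc i, Suc j)) * h j)"
    using T by (simp add: sesq_form_def sum.lessThan_Suc_shift del: sum.lessThan_Suc)
  also have "\<dots> = (\<Sum>i<n. \<Sum>j<n. cnj (h i) * of_real (T $$ (i, j)) * h j)"
    using r by (intro sum.cong refl) auto
  also have "\<dots> = sesq_form T h h"
    unfolding sesq_form_def sum.lessThan_Suc using T hn by simp
  finally show ?thesis .
qed

lemma Re_sesq_form_max_kernel_inv_shift_right:
  assumes pos: "\<And>k. k \<le> n \<Longrightarrow> g (Suc k) < g k"
    and antimono: "\<And>k. k < n \<Longrightarrow> g (Suc k) - g (Suc (Suc k)) \<le> g k - g (Suc k)"
    and hn: "h n = 0"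
  shows "Re (sesq_form (max_kernel_inv (Suc n) g) h h)
    \<le> Re (sesq_form (max_kernel_inv (Suc n) g) (shift_right h) (shift_right h))"
proof -
  define e where "e k = (cmod (h k - h (Suc k)))\<^sup>2" for k
  have "Re (sesq_form (max_kernel_inv (Suc n) g) h h) = (\<Sum>k<n. e k / (g k - g (Suc k)))"
    unfolding sesq_form_max_kernel_inv sum.lessThan_Suc e_def using hn by simp
  also have "\<dots> \<le> (\<Sum>k<n. e k / (g (Suc k) - g (Suc (Suc k))))"
    using pos antimono
    by (intro sum_mono divide_left_mono) (auto simp: e_def intro!: mult_pos_pos)
  also have "\<dots> \<le> (cmod (h 0))\<^sup>2 / (g 0 - g (Suc 0))
      + (\<Sum>k<n. e k / (g (Suc k) - g (Suc (Suc k))))"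
    using pos[of 0] by simp
  also have "\<dots> = Re (sesq_form (max_kernel_inv (Suc n) g) (shift_right h) (shift_right h))"
    unfolding sesq_form_max_kernel_inv sum.lessThan_Suc_shift e_def using hn
    by (cases n) (auto intro!: sum.cong simp: less_Suc_eq)
  finally show ?thesis .
qed

lemma coeff_reversed_root_factor:
  fixes P :: "'a :: idom poly"
  assumes deg: "degree P \<le> n" and "P \<noteq> 0" and "poly P z = 0"
  obtains h where "h n = 0" "\<exists>k<n. h k \<noteq> 0"
    "\<And>k. k \<le> n \<Longrightarrow> coeff P (n - k) = h k - z * shift_right h k"
proof -
  obtain Q where PQ: "P = [:-z, 1:] * Q"
    using \<open>poly P z = 0\<close> unfolding poly_eq_0_iff_dvd by (elim dvdE)
  have "Q \<noteq> 0" using \<open>P \<noteq> 0\<close> PQ by auto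
  then have "degree P = Suc (degree Q)" unfolding PQ by (subst degree_mult_eq) auto
  with deg have degQ: "degree Q < n" by simp
  define h where "h k = (if k < n then coeff Q (n - Suc k) else 0)" for k
  have "h (n - Suc (degree Q)) = lead_coeff Q"
    using degQ by (simp add: h_def Suc_diff_Suc)
  with degQ \<open>Q \<noteq> 0\<close> have "\<exists>k<n. h k \<noteq> 0"
    by (intro exI[of _ "n - Suc (degree Q)"]) auto
  moreover have "coeff P (n - k) = h k - z * shift_right h k" if "k \<le> n" for k
  proof -
    have "coeff P (n - k) = (case n - k of 0 \<Rightarrow> 0 | Suc j \<Rightarrow> coeff Q j) - z * coeff Q (n - k)"
      unfolding PQ by (simp add: coeff_pCons split: nat.split)
    also have "\<dots> = h k - z * shift_right h k"
      using that degQ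
      by (cases k; cases "n - k")
        (auto simp: h_def coeff_eq_0 Suc_diff_Suc intro!: arg_cong[where f = "coeff Q"])
    finally show ?thesis .
  qed
  ultimately show ?thesis using that[of h] by (simp add: h_def)
qed

lemma coeff_bpoly: "coeff (bpoly n b) j = (if j \<le> n then b $ (n - j) else 0)"
proof -
  have "coeff (bpoly n b) j = (\<Sum>k\<le>n. if k = n - j \<and> j \<le> n then b $ (n - j) else 0)"
    unfolding bpoly_def coeff_sum by (intro sum.cong refl) (auto simp: coeff_monom)
  then show ?thesis by (simp add: sum.delta')
qed

lemma degree_bpoly: "degree (bpoly n b) \<le> n"
  by (rule degree_le) (simp add: coeff_bpoly)

lemma bpoly_nonzero_imp_ex_nonzero: "bpoly n b \<noteq> 0 \<Longrightarrow> \<exists>k<Suc n. b $ k \<noteq> 0"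
  by (rule ccontr) (auto simp: coeff_bpoly intro!: poly_eqI)

lemma bpoly_root_shift_decomposition:
  fixes z :: complex
  assumes "bpoly n b \<noteq> 0" "poly (map_poly of_real (bpoly n b)) z = 0"
  obtains h where "h n = 0" "\<exists>k<n. h k \<noteq> 0"
    "\<And>k. k < Suc n \<Longrightarrow> of_real (b $ k) = h k - z * shift_right h k"
proof -
  define P where "P = map_poly complex_of_real (bpoly n b)"
  have "P \<noteq> 0" "degree P \<le> n"
    using assms(1) degree_bpoly by (simp_all add: P_def map_poly_eq_0_iff degree_map_poly)
  then obtain h where h: "h n = 0" "\<exists>k<n. h k \<noteq> 0"
      and hP: "\<And>k. k \<le> n \<Longrightarrow> coeff P (n - k) = h k - z * shift_right h k"
    using coeff_reversed_root_factor assms(2) unfolding P_def by blast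
  show thesis
  proof (rule that[OF h])
    show "of_real (b $ k) = h k - z * shift_right h k" if "k < Suc n" for k
      using hP[of k] that by (simp add: P_def coeff_map_poly coeff_bpoly)
  qed
qed

lemma max_kernel_inv_carrier [simp]: "max_kernel_inv m g \<in> carrier_mat m m"
  by (simp add: max_kernel_inv_def)

lemma transpose_max_kernel_inv: "transpose_mat (max_kernel_inv m g) = max_kernel_inv m g"
  by (rule eq_matI) (auto simp: max_kernel_inv_def mult_ac)

lemma Re_sesq_form_add_psd_pos:
  assumes "sym_pos_def_mat m S" "M \<in> carrier_mat m m"
    and "\<And>x. Re (sesq_form M x x) \<ge> 0" "\<exists>k<m. x k \<noteq> 0"
  shows "Re (sesq_form (S + M) x x) > 0"
proof -
  have "S \<in> carrier_mat m m" using assms(1) by (simp add: sym_pos_def_mat_def)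
  then show ?thesis
    using sesq_form_add_mat[of S m M] Re_sesq_form_pos_if_sym_pos_def[OF assms(1,4)] assms(2,3)
    by (simp add: add_pos_nonneg)
qed

lemma mult_mat_vec_minv:
  assumes "A \<in> carrier_mat m m" "det A \<noteq> 0" "v \<in> carrier_vec m"
  shows "A *\<^sub>v (minv A *\<^sub>v v) = v"
  using mult_mat_inverse[OF assms(1,2)] assms by (simp add: minv_def assoc_mult_mat_vec[symmetric])

definition tc_profile :: "real \<Rightarrow> real \<Rightarrow> nat \<Rightarrow> nat \<Rightarrow> real" where
  "tc_profile c \<beta> n k = c * (\<beta> ^ Suc k - \<beta> ^ (n + 2))"

lemma smult_K_TC: "c \<cdot>\<^sub>m K_TC n \<beta> = max_kernel (Suc n) (tc_profile c \<beta> n)"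
  by (rule eq_matI) (auto simp: K_TC_def max_kernel_def tc_profile_def max_def)

lemma tc_profile_step: "tc_profile c \<beta> n k - tc_profile c \<beta> n (Suc k) = c * \<beta> ^ Suc k * (1 - \<beta>)"
  by (simp add: tc_profile_def algebra_simps)

lemma tc_profile_strict_decreasing:
  assumes "c > 0" "0 < \<beta>" "\<beta> < 1"
  shows "tc_profile c \<beta> n (Suc k) < tc_profile c \<beta> n k"
proof -
  have "0 < c * \<beta> ^ Suc k * (1 - \<beta>)" using assms by simp
  then show ?thesis using tc_profile_step[of c \<beta> n k] by linarith
qed

lemma tc_profile_step_antimono:
  assumes "c > 0" "0 < \<beta>" "\<beta> < 1"
  shows "tc_profile c \<beta> n (Suc k) - tc_profile c \<beta> n (Suc (Suc k))
    \<le> tc_profile c \<beta> n k - tc_profile c \<beta> n (Suc k)"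
  unfolding tc_profile_step using assms by (simp add: mult_le_cancel_right1 power_decreasing)

lemma minv_smult_K_TC:
  assumes "c > 0" "0 < \<beta>" "\<beta> < 1"
  shows "minv (c \<cdot>\<^sub>m K_TC n \<beta>) = max_kernel_inv (Suc n) (tc_profile c \<beta> n)"
proof -
  have "max_kernel (Suc n) (tc_profile c \<beta> n) * max_kernel_inv (Suc n) (tc_profile c \<beta> n) = 1\<^sub>m (Suc n)"
    using tc_profile_strict_decreasing[OF assms]
    by (intro max_kernel_mult_inv) (auto simp: tc_profile_def intro: less_imp_neq[symmetric])
  then show ?thesis
    unfolding minv_def smult_K_TC
    by (intro minv_eq_right_inverse) (auto simp: max_kernel_def max_kernel_inv_def)
qed

lemma Re_sesq_form_regularized_pos:
  assumes "c > 0" "0 < \<beta>" "\<beta> < 1" "sym_pos_def_mat (Suc n) Sig" "\<exists>k<Suc n. x k \<noteq> 0"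
  shows "Re (sesq_form (Sig + max_kernel_inv (Suc n) (tc_profile c \<beta> n)) x x) > 0"
  using tc_profile_strict_decreasing[OF assms(1-3)]
  by (intro Re_sesq_form_add_psd_pos[OF assms(4) _ _ assms(5)] Re_sesq_form_max_kernel_inv_nonneg)
    auto

lemma Re_sesq_form_regularized_shift_right:
  assumes "c > 0" "0 < \<beta>" "\<beta> < 1" "sym_pos_def_mat (Suc n) Sig" "toeplitz_mat (Suc n) Sig"
    and "h n = 0"
  defines "A \<equiv> Sig + max_kernel_inv (Suc n) (tc_profile c \<beta> n)"
  shows "Re (sesq_form A h h) \<le> Re (sesq_form A (shift_right h) (shift_right h))"
proof -
  have "Sig \<in> carrier_mat (Suc n) (Suc n)" using assms(4) by (simp add: sym_pos_def_mat_def)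
  then show ?thesis
    unfolding A_def
    using sesq_form_add_mat sesq_form_toeplitz_shift_right[of n Sig h, OF assms(5,6)]
      Re_sesq_form_max_kernel_inv_shift_right[of n "tc_profile c \<beta> n" h,
        OF tc_profile_strict_decreasing[OF assms(1-3)] tc_profile_step_antimono[OF assms(1-3)] assms(6)]
    by simp
qed

lemma b_ML_normal_equation:
  assumes "N > n" "lam > 0" "0 < \<beta>" "\<beta> < 1" "sym_pos_def_mat (Suc n) Sig"
  defines "A \<equiv> Sig + max_kernel_inv (Suc n) (tc_profile (real (N - n) * lam) \<beta> n)"
  shows "A *\<^sub>v b_ML n N lam \<beta> b0t Sig = (1 / b0t) \<cdot>\<^sub>v unit_vec (Suc n) 0"
    and "b_ML n N lam \<beta> b0t Sig \<in> carrier_vec (Suc n)"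
proof -
  have c: "real (N - n) * lam > 0" using assms(1,2) by simp
  have A: "A \<in> carrier_mat (Suc n) (Suc n)"
    using assms(5) by (simp add: A_def sym_pos_def_mat_def)
  have "det A \<noteq> 0"
    using Re_sesq_form_regularized_pos[OF c assms(3-5)]
    by (intro det_nonzero_if_Re_sesq_form_pos[OF A]) (simp add: A_def)
  then have "A *\<^sub>v (minv A *\<^sub>v unit_vec (Suc n) 0) = unit_vec (Suc n) 0"
    and minv: "minv A \<in> carrier_mat (Suc n) (Suc n)"
    using mult_mat_vec_minv[OF A] mult_mat_inverse(2)[OF A] by (simp_all add: minv_def)
  moreover have b: "b_ML n N lam \<beta> b0t Sig = (1 / b0t) \<cdot>\<^sub>v (minv A *\<^sub>v unit_vec (Suc n) 0)"
    unfolding b_ML_def A_def minv_smult_K_TC[OF c assms(3,4)] by simp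
  ultimately show "A *\<^sub>v b_ML n N lam \<beta> b0t Sig = (1 / b0t) \<cdot>\<^sub>v unit_vec (Suc n) 0"
    using A by (simp add: mult_mat_vec)
  show "b_ML n N lam \<beta> b0t Sig \<in> carrier_vec (Suc n)"
    unfolding b using minv by simp
qed

theorem proposition2:
  fixes n N :: nat and lam \<beta> b0t :: real and Sig :: "real mat"
  assumes "n \<ge> 1" and "N > n" and "lam > 0" and "0 < \<beta>" and "\<beta> < 1" and "b0t \<noteq> 0"
    and "sym_pos_def_mat (n+1) Sig" and "toeplitz_mat (n+1) Sig"
    and "bpoly n (b_ML n N lam \<beta> b0t Sig) \<noteq> 0"
  shows "\<forall>z :: complex. poly (map_poly of_real (bpoly n (b_ML n N lam \<beta> b0t Sig))) z = 0
           \<longrightarrow> cmod z < 1"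
proof (intro allI impI)
  fix z :: complex
  define b where "b = b_ML n N lam \<beta> b0t Sig"
  define c where "c = real (N - n) * lam"
  define A where "A = Sig + max_kernel_inv (Suc n) (tc_profile c \<beta> n)"
  assume root: "poly (map_poly of_real (bpoly n (b_ML n N lam \<beta> b0t Sig))) z = 0"
  obtain h where h: "h n = 0" "\<exists>k<n. h k \<noteq> 0"
      and b_eq: "\<And>k. k < Suc n \<Longrightarrow> of_real (b $ k) = h k - z * shift_right h k"
    using bpoly_root_shift_decomposition[OF assms(9) root] unfolding b_def by blast
  have c: "c > 0" using assms(2,3) by (simp add: c_def)
  have spd: "sym_pos_def_mat (Suc n) Sig" and toeplitz: "toeplitz_mat (Suc n) Sig"
    using assms(7,8) by simp_all
  then have A: "A \<in> carrier_mat (Suc n) (Suc n)" "transpose_mat A = A"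
    by (auto simp: A_def sym_pos_def_mat_def transpose_add transpose_max_kernel_inv)
  show "cmod z < 1"
  proof (rule cmod_lt_1_if_shift_dominates[OF A _ b_eq])
    show "Re (sesq_form A x x) > 0" if "\<exists>k<Suc n. x k \<noteq> 0" for x
      unfolding A_def by (rule Re_sesq_form_regularized_pos[OF c assms(4,5) spd that])
    show "\<exists>k<Suc n. complex_of_real (b $ k) \<noteq> 0"
      using bpoly_nonzero_imp_ex_nonzero[OF assms(9)] by (simp add: b_def)
    show "\<exists>k<Suc n. shift_right h k \<noteq> 0" using h(2) by auto
    show "sesq_form A (shift_right h) (\<lambda>j. complex_of_real (b $ j)) = 0"
      using sesq_form_mult_vec[OF A(1) b_ML_normal_equation(2)[OF assms(2-5) spd]]
        b_ML_normal_equation(1)[OF assms(2-5) spd]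
      by (simp add: b_def A_def c_def) (auto intro!: sum.neutral)
    show "Re (sesq_form A h h) \<le> Re (sesq_form A (shift_right h) (shift_right h))"
      using Re_sesq_form_regularized_shift_right[where h = h, OF c assms(4,5) spd toeplitz h(1)]
      by (simp add: A_def)
  qed
qed

end
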